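(* For all $\mathbf u\in C^3(\overline{\mathbb{B}^3})\times C^2(\overline{\mathbb{B}^3})$, \[ \operatorname{Re}(\tilde{\mathbf L}\mathbf u|\mathbf u)_3\le-\tfrac2{p-1}(\mathbf u|\mathbf u)_3. \]
   Context: Fix $p>3$. $\mathbb{B}^3$ is the open unit ball in $\mathbb{R}^3$, $\mathbb{S}^2=\partial\mathbb{B}^3$ with surface measure $\sigma$; repeated latin indices are summed from 1 to 3; functions are complex-valued. For $\mathbf u,\mathbf v\in C^2(\overline{\mathbb{B}^3})\times C^1(\overline{\mathbb{B}^3})$, $(\mathbf u|\mathbf v)_3=\int_{\mathbb{S}^2}[\omega^j\partial_ju_1+u_1+u_2](\omega)d\sigma(\omega)\int_{\mathbb{S}^2}\overline{[\omega^j\partial_jv_1+v_1+v_2](\omega)}d\sigma(\omega)$. For $\mathbf u\in C^3(\overline{\mathbb{B}^3})\times C^2(\overline{\mathbb{B}^3})$, $\tilde{\mathbf L}\mathbf u(\xi)=\big(-\xi^j\partial_ju_1(\xi)-\frac2{p-1}u_1(\xi)+u_2(\xi),\ \partial^j\partial_ju_1(\xi)-\xi^j\partial_ju_2(\xi)-\frac{p+1}{p-1}u_2(\xi)\big)$. *)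

theory Defs
  imports "HOL-Analysis.Analysis"
begin

type_synonym R3 = "real ^ 3"

abbreviation Bbar :: "R3 set" where "Bbar \<equiv> cball 0 1"

text \<open>Partial derivative in direction e_j, taken within the closed ball
  (one-sided at boundary points).\<close>
definition pd :: "3 \<Rightarrow> (R3 \<Rightarrow> complex) \<Rightarrow> R3 \<Rightarrow> complex" where
  "pd j f x = frechet_derivative f (at x within Bbar) (axis j 1)"

fun Ck :: "nat \<Rightarrow> (R3 \<Rightarrow> complex) \<Rightarrow> bool" where
  "Ck 0 f = continuous_on Bbar f"
| "Ck (Suc k) f = (continuous_on Bbar f \<and> (\<forall>x\<in>Bbar. f differentiable (at x within Bbar))
                   \<and> (\<forall>j. Ck k (pd j f)))"

text \<open>Surface integral over S^2 w.r.t. surface measure, via spherical coordinates.\<close>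
definition sph :: "real \<Rightarrow> real \<Rightarrow> R3" where
  "sph \<theta> \<phi> = vector [sin \<theta> * cos \<phi>, sin \<theta> * sin \<phi>, cos \<theta>]"

definition sphere_int :: "(R3 \<Rightarrow> complex) \<Rightarrow> complex" where
  "sphere_int g = integral {0..2*pi} (\<lambda>\<phi>. integral {0..pi} (\<lambda>\<theta>. g (sph \<theta> \<phi>) * of_real (sin \<theta>)))"

definition bdry :: "(R3 \<Rightarrow> complex) \<times> (R3 \<Rightarrow> complex) \<Rightarrow> R3 \<Rightarrow> complex" where
  "bdry u \<omega> = (\<Sum>j\<in>UNIV. of_real (\<omega> $ j) * pd j (fst u) \<omega>) + fst u \<omega> + snd u \<omega>"

definition ip3 :: "(R3 \<Rightarrow> complex) \<times> (R3 \<Rightarrow> complex) \<Rightarrow> (R3 \<Rightarrow> complex) \<times> (R3 \<Rightarrow> complex) \<Rightarrow> complex" where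
  "ip3 u v = sphere_int (bdry u) * cnj (sphere_int (bdry v))"

definition Lt :: "real \<Rightarrow> (R3 \<Rightarrow> complex) \<times> (R3 \<Rightarrow> complex) \<Rightarrow> (R3 \<Rightarrow> complex) \<times> (R3 \<Rightarrow> complex)" where
  "Lt p u = ((\<lambda>\<xi>. - (\<Sum>j\<in>UNIV. of_real (\<xi> $ j) * pd j (fst u) \<xi>) - of_real (2 / (p - 1)) * fst u \<xi> + snd u \<xi>),
             (\<lambda>\<xi>. (\<Sum>j\<in>UNIV. pd j (pd j (fst u)) \<xi>) - (\<Sum>j\<in>UNIV. of_real (\<xi> $ j) * pd j (snd u) \<xi>)
                   - of_real ((p + 1) / (p - 1)) * snd u \<xi>))"

end

theory Submission
  imports Defs
begin

text \<open>On the unit sphere the boundary functional of \<open>\<tilde>L u\<close> equals \<open>-2/(p-1)\<close> times that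
  of \<open>u\<close> plus the Laplace--Beltrami operator of \<open>u\<^sub>1\<close>: the radial second derivative coming
  from the Laplacian cancels against the transport terms. The Laplace--Beltrami operator
  integrates to zero over the sphere (in spherical coordinates \<open>sin \<theta> \<Delta>\<^sub>S u\<^sub>1\<close> is a
  \<open>(\<theta>, \<phi>)\<close>-divergence of a field vanishing at the poles and \<open>2\<pi>\<close>-periodic in \<open>\<phi>\<close>), so
  \<open>(\<tilde>L u|u)\<^sub>3 = -2/(p-1) (u|u)\<^sub>3\<close>: the inequality holds with equality.\<close>

lemma has_derivative_unique_within_convex:
  fixes f :: "'a::real_normed_vector \<Rightarrow> 'b::real_normed_vector"
  assumes S: "convex S" "interior S \<noteq> {}" and x: "x \<in> S"
    and f1: "(f has_derivative f1) (at x within S)"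
    and f2: "(f has_derivative f2) (at x within S)"
  shows "f1 = f2"
proof -
  have lin1: "linear f1" and lin2: "linear f2"
    using f1 f2 has_derivative_linear by blast+
  have segment: "f1 (y - x) = f2 (y - x)" if y: "y \<in> S" for y
  proof -
    define g where "g t = x + t *\<^sub>R (y - x)" for t :: real
    have "g t \<in> S" if "t \<in> {0..1}" for t
    proof -
      have "g t = (1 - t) *\<^sub>R x + t *\<^sub>R y" by (simp add: g_def algebra_simps)
      then show ?thesis using S(1) x y that by (simp add: convex_alt)
    qed
    then have "g ` {0..1} \<subseteq> S" by blast
    have g': "(g has_derivative (\<lambda>s. s *\<^sub>R (y - x))) (at 0 within {0..1})"
      unfolding g_def by (auto intro!: derivative_eq_intros)
    have "((\<lambda>t. f (g t)) has_vector_derivative f' (y - x)) (at 0 within {0..1})"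
      if "(f has_derivative f') (at x within S)" "linear f'" for f'
    proof -
      have "(f has_derivative f') (at (g 0) within g ` {0..1})"
        using has_derivative_subset[OF that(1) \<open>g ` {0..1} \<subseteq> S\<close>] by (simp add: g_def)
      from has_derivative_in_compose[OF g' this] show ?thesis
        by (simp add: has_vector_derivative_def linear_scale[OF that(2)])
    qed
    from this[OF f1 lin1] this[OF f2 lin2] show ?thesis
      by (intro vector_derivative_unique_within_closed_interval[of 0 1 0]) auto
  qed
  obtain c r where "r > 0" "ball c r \<subseteq> S"
    using S(2) by (metis all_not_in_conv mem_interior)
  show ?thesis
  proof
    fix h :: 'a
    define e where "e = r / (2 * (1 + norm h))"
    have "e > 0" using \<open>r > 0\<close> by (simp add: e_def add_pos_nonneg)
    have "norm (e *\<^sub>R h) < r"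
      using \<open>r > 0\<close> by (simp add: e_def divide_less_eq algebra_simps add_pos_nonneg add_nonneg_pos)
    then have "c + e *\<^sub>R h \<in> S" "c \<in> S"
      using \<open>ball c r \<subseteq> S\<close> \<open>r > 0\<close> by (auto simp: dist_norm)
    from segment[OF this(1)] segment[OF this(2)]
    have "e *\<^sub>R f1 h = e *\<^sub>R f2 h"
      using linear_add[OF lin1, of "c - x" "e *\<^sub>R h"] linear_add[OF lin2, of "c - x" "e *\<^sub>R h"]
      by (simp add: linear_scale[OF lin1] linear_scale[OF lin2] diff_add_eq[symmetric] add.commute)
    then show "f1 h = f2 h" using \<open>e > 0\<close> by simp
  qed
qed

lemma pd_eq_derivative:
  assumes "x \<in> Bbar" and "(f has_derivative f') (at x within Bbar)"
  shows "pd j f x = f' (axis j 1)"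
proof -
  have "(f has_derivative frechet_derivative f (at x within Bbar)) (at x within Bbar)"
    using assms(2) frechet_derivative_works differentiableI by blast
  with assms have "frechet_derivative f (at x within Bbar) = f'"
    by (intro has_derivative_unique_within_convex[of Bbar x f]) auto
  then show ?thesis by (simp add: pd_def)
qed

lemma has_derivative_pd_expansion:
  fixes f :: "R3 \<Rightarrow> complex"
  assumes "f differentiable (at x within Bbar)"
  shows "(f has_derivative (\<lambda>h. \<Sum>j\<in>UNIV. of_real (h $ j) * pd j f x)) (at x within Bbar)"
proof -
  let ?F = "frechet_derivative f (at x within Bbar)"
  have F: "(f has_derivative ?F) (at x within Bbar)"
    using assms frechet_derivative_works by blast
  have lin: "linear ?F" using F has_derivative_linear by blast
  have "?F h = (\<Sum>j\<in>UNIV. of_real (h $ j) * pd j f x)" for h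
  proof -
    have "?F h = ?F (\<Sum>j\<in>UNIV. h $ j *\<^sub>R axis j 1)"
      using basis_expansion[of h] by (simp add: scalar_mult_eq_scaleR)
    also have "\<dots> = (\<Sum>j\<in>UNIV. h $ j *\<^sub>R ?F (axis j 1))"
      by (simp add: linear_sum[OF lin] linear_scale[OF lin])
    finally show ?thesis by (simp add: pd_def scaleR_conv_of_real)
  qed
  with F show ?thesis by (metis (no_types, lifting) ext)
qed

lemma has_vector_derivative_comp_pd:
  fixes g :: "real \<Rightarrow> R3"
  assumes "\<And>s. g s \<in> Bbar" and "(g has_vector_derivative g') (at t)"
    and "f differentiable (at (g t) within Bbar)"
  shows "((\<lambda>s. f (g s)) has_vector_derivative (\<Sum>j\<in>UNIV. of_real (g' $ j) * pd j f (g t))) (at t)"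
proof -
  have "(f has_derivative (\<lambda>h. \<Sum>j\<in>UNIV. of_real (h $ j) * pd j f (g t))) (at (g t) within range g)"
    using assms(1) by (intro has_derivative_subset[OF has_derivative_pd_expansion[OF assms(3)]]) auto
  from has_derivative_in_compose[OF assms(2)[unfolded has_vector_derivative_def] this]
  show ?thesis unfolding has_vector_derivative_def
    by (simp only: vector_scaleR_component of_real_mult) (simp add: scaleR_conv_of_real sum_distrib_left mult.assoc)
qed

text \<open>For \<open>w\<close> on the unit sphere this is the Laplace--Beltrami operator of \<open>u\<close> restricted
  to the sphere: the Laplacian minus the second radial derivative \<open>w\<^sup>j w\<^sup>k \<partial>\<^sub>j\<partial>\<^sub>k u\<close>
  minus twice the radial derivative.\<close>
definition sph_laplacian :: "(R3 \<Rightarrow> complex) \<Rightarrow> R3 \<Rightarrow> complex" where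
  "sph_laplacian u w = (\<Sum>j\<in>UNIV. pd j (pd j u) w)
     - (\<Sum>j\<in>UNIV. \<Sum>k\<in>UNIV. of_real (w $ j) * of_real (w $ k) * pd j (pd k u) w)
     - 2 * (\<Sum>j\<in>UNIV. of_real (w $ j) * pd j u w)"

lemma bdry_Lt:
  assumes w: "w \<in> Bbar" and p: "p \<noteq> 1"
    and u1: "u1 differentiable (at w within Bbar)" "\<And>k. pd k u1 differentiable (at w within Bbar)"
    and u2: "u2 differentiable (at w within Bbar)"
  shows "bdry (Lt p (u1, u2)) w = - of_real (2 / (p - 1)) * bdry (u1, u2) w + sph_laplacian u1 w"
proof -
  define a where "a = 2 / (p - 1)"
  have b: "(p + 1) / (p - 1) = 1 + a" using p by (simp add: a_def field_simps)
  let ?v1 = "\<lambda>\<xi>. - (\<Sum>j\<in>UNIV. of_real (\<xi> $ j) * pd j u1 \<xi>) - of_real a * u1 \<xi> + u2 \<xi>"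
  have "(?v1 has_derivative (\<lambda>h. - (\<Sum>j\<in>UNIV. of_real (w $ j) * (\<Sum>k\<in>UNIV. of_real (h $ k) * pd k (pd j u1) w)
       + of_real (h $ j) * pd j u1 w) - of_real a * (\<Sum>j\<in>UNIV. of_real (h $ j) * pd j u1 w)
       + (\<Sum>j\<in>UNIV. of_real (h $ j) * pd j u2 w))) (at w within Bbar)"
    using has_derivative_pd_expansion[OF u1(1)] has_derivative_pd_expansion[OF u2]
      has_derivative_pd_expansion[OF u1(2)]
    by (intro derivative_eq_intros has_derivative_sum)
       (auto intro: bounded_linear_imp_has_derivative bounded_linear_vec_nth)
  moreover have axis: "of_real ((axis j 1 :: R3) $ k) * z = (if k = j then z else 0)" for j k z
    by (simp add: axis_def)
  ultimately have pd_v1: "pd j ?v1 w = - (pd j u1 w + (\<Sum>k\<in>UNIV. of_real (w $ k) * pd j (pd k u1) w))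
                       - of_real a * pd j u1 w + pd j u2 w" for j
    by (simp add: pd_eq_derivative[OF w] axis sum.distrib)
  show ?thesis
    unfolding bdry_def Lt_def sph_laplacian_def fst_conv snd_conv pd_v1 a_def[symmetric] b
    by (simp add: sum_3 algebra_simps)
qed

lemma integral_rectangle_divergence_eq_0:
  fixes A C P Q :: "real \<Rightarrow> real \<Rightarrow> 'b::banach"
  assumes "a \<le> b" "c \<le> d"
    and A: "\<And>t f. t \<in> {a..b} \<Longrightarrow> f \<in> {c..d} \<Longrightarrow>
              ((\<lambda>t. A t f) has_vector_derivative P t f) (at t within {a..b})"
    and C: "\<And>t f. t \<in> {a..b} \<Longrightarrow> f \<in> {c..d} \<Longrightarrow>
              ((\<lambda>f. C t f) has_vector_derivative Q t f) (at f within {c..d})"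
    and A_ends: "\<And>f. f \<in> {c..d} \<Longrightarrow> A a f = A b f"
    and C_ends: "\<And>t. t \<in> {a..b} \<Longrightarrow> C t c = C t d"
    and P: "continuous_on ({a..b} \<times> {c..d}) (\<lambda>(t, f). P t f)"
    and Q: "continuous_on ({a..b} \<times> {c..d}) (\<lambda>(t, f). Q t f)"
  shows "integral {c..d} (\<lambda>f. integral {a..b} (\<lambda>t. P t f + Q t f)) = 0"
proof -
  have slice: "(\<lambda>t. R t f) integrable_on {a..b}"
    if "continuous_on ({a..b} \<times> {c..d}) (\<lambda>(t, f). R t f)" "f \<in> {c..d}" for R :: "real \<Rightarrow> real \<Rightarrow> 'b" and f
  proof (rule integrable_continuous_interval)
    have "(\<lambda>t. (t, f)) ` {a..b} \<subseteq> {a..b} \<times> {c..d}" using that(2) by auto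
    then have "continuous_on {a..b} ((\<lambda>(t, f). R t f) \<circ> (\<lambda>t. (t, f)))"
      by (intro continuous_on_compose continuous_intros continuous_on_subset[OF that(1)])
    then show "continuous_on {a..b} (\<lambda>t. R t f)" by (simp add: o_def)
  qed
  have P_int: "integral {a..b} (\<lambda>t. P t f) = 0" if "f \<in> {c..d}" for f
    using fundamental_theorem_of_calculus[OF \<open>a \<le> b\<close> A[OF _ that]] A_ends[OF that]
    by (simp add: integral_unique)
  have Q_int: "integral {c..d} (\<lambda>f. Q t f) = 0" if "t \<in> {a..b}" for t
    using fundamental_theorem_of_calculus[OF \<open>c \<le> d\<close> C[OF that]] C_ends[OF that]
    by (simp add: integral_unique)
  have Q_swapped: "continuous_on (cbox (c, a) (d, b)) (\<lambda>(f, t). Q t f)"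
  proof -
    have "continuous_on ({c..d} \<times> {a..b}) ((\<lambda>(t, f). Q t f) \<circ> prod.swap)"
      by (intro continuous_on_compose continuous_on_swap continuous_on_subset[OF Q]) auto
    then show ?thesis by (simp add: cbox_Pair_eq o_def case_prod_beta)
  qed
  have "integral {c..d} (\<lambda>f. integral {a..b} (\<lambda>t. P t f + Q t f))
      = integral {c..d} (\<lambda>f. integral {a..b} (\<lambda>t. Q t f))"
  proof (rule integral_cong)
    fix f assume f: "f \<in> {c..d}"
    show "integral {a..b} (\<lambda>t. P t f + Q t f) = integral {a..b} (\<lambda>t. Q t f)"
      using integral_add[OF slice[of P, OF P f] slice[of Q, OF Q f]] P_int[OF f] by simp
  qed
  also have "\<dots> = integral {a..b} (\<lambda>t. integral {c..d} (\<lambda>f. Q t f))"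
    using integral_swap_continuous[OF Q_swapped] by simp
  also have "\<dots> = integral {a..b} (\<lambda>t. 0)" by (intro integral_cong Q_int)
  finally show ?thesis by simp
qed

lemma vector3_eq_axis: "(vector [a, b, c] :: R3) = a *\<^sub>R axis 1 1 + b *\<^sub>R axis 2 1 + c *\<^sub>R axis 3 1"
  by (simp add: vec_eq_iff forall_3 axis_def)

lemma has_vector_derivative_vector3:
  assumes "(a has_real_derivative a') F" "(b has_real_derivative b') F" "(c has_real_derivative c') F"
  shows "((\<lambda>t. vector [a t, b t, c t] :: R3) has_vector_derivative vector [a', b', c']) F"
proof -
  have scale: "((\<lambda>t. f t *\<^sub>R v) has_vector_derivative f' *\<^sub>R v) F"
    if "(f has_real_derivative f') F" for f f' and v :: R3
    using bounded_linear.has_vector_derivative[OF bounded_linear_scaleR_left[of v]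
        that[unfolded has_real_derivative_iff_has_vector_derivative]]
    by simp
  show ?thesis unfolding vector3_eq_axis
    by (intro has_vector_derivative_add scale assms)
qed

lemma sph_nth: "sph t f $ 1 = sin t * cos f" "sph t f $ 2 = sin t * sin f" "sph t f $ 3 = cos t"
  by (simp_all add: sph_def)

lemma norm_sph: "norm (sph t f) = 1"
proof -
  have "sph t f \<bullet> sph t f = (sin t * cos f)\<^sup>2 + (sin t * sin f)\<^sup>2 + (cos t)\<^sup>2"
    by (simp add: inner_vec_def sum_3 sph_nth power2_eq_square)
  also have "\<dots> = (sin t)\<^sup>2 * ((sin f)\<^sup>2 + (cos f)\<^sup>2) + (cos t)\<^sup>2" by algebra
  also have "\<dots> = 1" by simp
  finally show ?thesis by (simp add: norm_eq_sqrt_inner)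
qed

lemma sph_in_Bbar: "sph t f \<in> Bbar"
  by (simp add: norm_sph)

lemma has_vector_derivative_sph_theta:
  "((\<lambda>t. sph t f) has_vector_derivative vector [cos t * cos f, cos t * sin f, - sin t]) (at t)"
  unfolding sph_def by (intro has_vector_derivative_vector3) (auto intro!: derivative_eq_intros)

lemma has_vector_derivative_sph_phi:
  "((\<lambda>f. sph t f) has_vector_derivative vector [sin t * (- sin f), sin t * cos f, 0]) (at f)"
  unfolding sph_def by (intro has_vector_derivative_vector3) (auto intro!: derivative_eq_intros)

lemma continuous_on_comp_sph:
  assumes "continuous_on Bbar g"
  shows "continuous_on UNIV (\<lambda>(t, f). g (sph t f))"
proof -
  have "continuous_on UNIV (\<lambda>z. sph (fst z) (snd z))"
    unfolding sph_def vector3_eq_axis by (intro continuous_intros)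
  moreover have "range (\<lambda>z. sph (fst z) (snd z)) \<subseteq> Bbar" using sph_in_Bbar by blast
  ultimately show ?thesis
    using continuous_on_compose2[OF assms] by (simp add: case_prod_beta)
qed

text \<open>In spherical coordinates \<open>sin \<theta> \<cdot> \<Delta>\<^sub>S u = \<partial>\<^sub>\<theta> A + \<partial>\<^sub>\<phi> C\<close> with
  \<open>A = sin \<theta> \<partial>\<^sub>\<theta> (u \<circ> sph)\<close> and \<open>C = \<partial>\<^sub>\<phi> (u \<circ> sph) / sin \<theta>\<close>; below \<open>A\<close> and \<open>C\<close> are
  written out through the Cartesian partial derivatives \<open>E j = \<partial>\<^sub>j u \<circ> sph\<close>.\<close>
lemma sph_laplacian_divergence_form:
  assumes dd: "\<And>j x. x \<in> Bbar \<Longrightarrow> pd j u differentiable (at x within Bbar)"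
    and c1: "\<And>j. continuous_on Bbar (pd j u)"
    and c2: "\<And>j k. continuous_on Bbar (pd k (pd j u))"
  obtains A C P Q :: "real \<Rightarrow> real \<Rightarrow> complex"
  where "\<And>t f. ((\<lambda>t. A t f) has_vector_derivative P t f) (at t)"
    and "\<And>t f. ((\<lambda>f. C t f) has_vector_derivative Q t f) (at f)"
    and "\<And>f. A 0 f = A pi f" and "\<And>t. C t 0 = C t (2 * pi)"
    and "continuous_on UNIV (\<lambda>(t, f). P t f)" and "continuous_on UNIV (\<lambda>(t, f). Q t f)"
    and "\<And>t f. sph_laplacian u (sph t f) * of_real (sin t) = P t f + Q t f"
proof -
  define E where "E j t f = pd j u (sph t f)" for j t f
  define H where "H j k t f = pd k (pd j u) (sph t f)" for j k t f
  define Et where "Et j t f = of_real (cos t * cos f) * H j 1 t f + of_real (cos t * sin f) * H j 2 t f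
    + of_real (- sin t) * H j 3 t f" for j t f
  define Ef where "Ef j t f = of_real (sin t * - sin f) * H j 1 t f + of_real (sin t * cos f) * H j 2 t f
    + of_real 0 * H j 3 t f" for j t f
  have dEt: "((\<lambda>t. E j t f) has_vector_derivative Et j t f) (at t)" for j t f
    using has_vector_derivative_comp_pd[OF sph_in_Bbar has_vector_derivative_sph_theta dd[OF sph_in_Bbar]]
    by (simp add: E_def H_def Et_def sum_3)
  have dEf: "((\<lambda>f. E j t f) has_vector_derivative Ef j t f) (at f)" for j t f
    using has_vector_derivative_comp_pd[OF sph_in_Bbar has_vector_derivative_sph_phi dd[OF sph_in_Bbar]]
    by (simp add: E_def H_def Ef_def sum_3)
  define A where "A t f = of_real (sin t) * (of_real (cos t * cos f) * E 1 t f
    + of_real (cos t * sin f) * E 2 t f + of_real (- sin t) * E 3 t f)" for t f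
  define P where "P t f = of_real (cos t) * (of_real (cos t * cos f) * E 1 t f
      + of_real (cos t * sin f) * E 2 t f + of_real (- sin t) * E 3 t f)
    + of_real (sin t) * (of_real (- sin t * cos f) * E 1 t f + of_real (cos t * cos f) * Et 1 t f
      + of_real (- sin t * sin f) * E 2 t f + of_real (cos t * sin f) * Et 2 t f
      + of_real (- cos t) * E 3 t f + of_real (- sin t) * Et 3 t f)" for t f
  define C where "C t f = of_real (- sin f) * E 1 t f + of_real (cos f) * E 2 t f" for t f
  define Q where "Q t f = of_real (- cos f) * E 1 t f + of_real (- sin f) * Ef 1 t f
    + of_real (- sin f) * E 2 t f + of_real (cos f) * Ef 2 t f" for t f
  have "((\<lambda>t. A t f) has_vector_derivative P t f) (at t)" for t f
    unfolding A_def P_def by (rule derivative_eq_intros dEt refl | simp)+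
  moreover have "((\<lambda>f. C t f) has_vector_derivative Q t f) (at f)" for t f
    unfolding C_def Q_def by (rule derivative_eq_intros dEf refl | simp)+
  moreover have "A 0 f = A pi f" for f
    by (simp add: A_def)
  moreover have "C t 0 = C t (2 * pi)" for t
    by (simp add: C_def E_def sph_def)
  moreover have "continuous_on UNIV (\<lambda>(t, f). P t f)" "continuous_on UNIV (\<lambda>(t, f). Q t f)"
  proof -
    have cE: "continuous_on UNIV (\<lambda>z. E j (fst z) (snd z))"
      and cH: "continuous_on UNIV (\<lambda>z. H j k (fst z) (snd z))" for j k
      using continuous_on_comp_sph[OF c1] continuous_on_comp_sph[OF c2]
      by (simp_all add: E_def H_def case_prod_beta)
    show "continuous_on UNIV (\<lambda>(t, f). P t f)" "continuous_on UNIV (\<lambda>(t, f). Q t f)"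
      unfolding P_def Q_def Et_def Ef_def case_prod_beta by (intro continuous_intros cE cH)+
  qed
  moreover have "sph_laplacian u (sph t f) * of_real (sin t) = P t f + Q t f" for t f
  proof -
    have "(complex_of_real (sin x))\<^sup>2 + (complex_of_real (cos x))\<^sup>2 = 1" for x
      by (metis of_real_add of_real_power sin_cos_squared_add of_real_1)
    note sc = this
    have "sph_laplacian u (sph t f) * of_real (sin t) = ((H 1 1 t f + H 2 2 t f + H 3 3 t f)
      - (of_real (sin t * cos f) * of_real (sin t * cos f) * H 1 1 t f
         + of_real (sin t * cos f) * of_real (sin t * sin f) * H 2 1 t f
         + of_real (sin t * cos f) * of_real (cos t) * H 3 1 t f
         + of_real (sin t * sin f) * of_real (sin t * cos f) * H 1 2 t f
         + of_real (sin t * sin f) * of_real (sin t * sin f) * H 2 2 t f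
         + of_real (sin t * sin f) * of_real (cos t) * H 3 2 t f
         + of_real (cos t) * of_real (sin t * cos f) * H 1 3 t f
         + of_real (cos t) * of_real (sin t * sin f) * H 2 3 t f
         + of_real (cos t) * of_real (cos t) * H 3 3 t f)
      - 2 * (of_real (sin t * cos f) * E 1 t f + of_real (sin t * sin f) * E 2 t f
         + of_real (cos t) * E 3 t f)) * of_real (sin t)"
      unfolding sph_laplacian_def by (simp add: sum_3 sph_nth E_def H_def)
    also have "\<dots> = P t f + Q t f"
      unfolding P_def Q_def Et_def Ef_def of_real_mult of_real_minus of_real_0
      using sc[of t] sc[of f] by algebra
    finally show ?thesis .
  qed
  ultimately show thesis by (rule that)
qed

lemma sphere_int_sph_laplacian_eq_0:
  assumes "\<And>j x. x \<in> Bbar \<Longrightarrow> pd j u differentiable (at x within Bbar)"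
    and "\<And>j. continuous_on Bbar (pd j u)"
    and "\<And>j k. continuous_on Bbar (pd k (pd j u))"
  shows "sphere_int (sph_laplacian u) = 0"
proof -
  have "integral {0..2*pi} (\<lambda>f. integral {0..pi} (\<lambda>t. sph_laplacian u (sph t f) * of_real (sin t))) = 0"
  proof (rule sph_laplacian_divergence_form[OF assms])
    fix A C P Q :: "real \<Rightarrow> real \<Rightarrow> complex"
    assume A: "\<And>t f. ((\<lambda>t. A t f) has_vector_derivative P t f) (at t)"
      and C: "\<And>t f. ((\<lambda>f. C t f) has_vector_derivative Q t f) (at f)"
      and A_ends: "\<And>f. A 0 f = A pi f" and C_ends: "\<And>t. C t 0 = C t (2 * pi)"
      and P: "continuous_on UNIV (\<lambda>(t, f). P t f)" and Q: "continuous_on UNIV (\<lambda>(t, f). Q t f)"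
      and divergence: "\<And>t f. sph_laplacian u (sph t f) * of_real (sin t) = P t f + Q t f"
    have "integral {0..2*pi} (\<lambda>f. integral {0..pi} (\<lambda>t. P t f + Q t f)) = 0"
      by (rule integral_rectangle_divergence_eq_0[where A = A and C = C])
         (auto intro: has_vector_derivative_at_within A C A_ends C_ends
           continuous_on_subset[OF P] continuous_on_subset[OF Q])
    then show ?thesis by (simp only: divergence)
  qed
  then show ?thesis by (simp add: sphere_int_def)
qed

lemma sphere_integrand_integrable_continuous:
  fixes g :: "R3 \<Rightarrow> complex"
  assumes "continuous_on Bbar g"
  shows "(\<lambda>t. g (sph t f) * of_real (sin t)) integrable_on {0..pi}"
    and "continuous_on S (\<lambda>f. integral {0..pi} (\<lambda>t. g (sph t f) * of_real (sin t)))"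
proof -
  have "continuous_on UNIV ((\<lambda>(t, f). g (sph t f)) \<circ> prod.swap)"
    by (intro continuous_on_compose continuous_on_swap
        continuous_on_subset[OF continuous_on_comp_sph[OF assms]]) auto
  then have g_sph: "continuous_on UNIV (\<lambda>z. g (sph (snd z) (fst z)))"
    by (simp add: o_def case_prod_beta)
  have integrand: "continuous_on UNIV (\<lambda>(f, t). g (sph t f) * of_real (sin t))"
    unfolding case_prod_beta by (intro continuous_intros g_sph)
  have "continuous_on {0..pi} ((\<lambda>(f, t). g (sph t f) * of_real (sin t)) \<circ> (\<lambda>t. (f, t)))"
    by (intro continuous_on_compose continuous_intros continuous_on_subset[OF integrand]) auto
  then show "(\<lambda>t. g (sph t f) * of_real (sin t)) integrable_on {0..pi}"
    by (intro integrable_continuous_interval) (simp add: o_def)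
  show "continuous_on S (\<lambda>f. integral {0..pi} (\<lambda>t. g (sph t f) * of_real (sin t)))"
    using integral_continuous_on_param[OF continuous_on_subset[OF integrand], of S 0 pi] by simp
qed

lemma sphere_int_scaled_add:
  fixes g h :: "R3 \<Rightarrow> complex"
  assumes g: "continuous_on Bbar g" and h: "continuous_on Bbar h"
  shows "sphere_int (\<lambda>x. k * g x + h x) = k * sphere_int g + sphere_int h"
proof -
  define G where "G f = integral {0..pi} (\<lambda>t. g (sph t f) * of_real (sin t))" for f
  define H where "H f = integral {0..pi} (\<lambda>t. h (sph t f) * of_real (sin t))" for f
  have "integral {0..pi} (\<lambda>t. (k * g (sph t f) + h (sph t f)) * of_real (sin t)) = k * G f + H f" for f
  proof -
    have "integral {0..pi} (\<lambda>t. (k * g (sph t f) + h (sph t f)) * of_real (sin t))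
        = integral {0..pi} (\<lambda>t. k * (g (sph t f) * of_real (sin t)) + h (sph t f) * of_real (sin t))"
      by (simp add: algebra_simps)
    also have "\<dots> = k * G f + H f"
      unfolding G_def H_def using sphere_integrand_integrable_continuous(1)[OF g] sphere_integrand_integrable_continuous(1)[OF h]
      by (simp add: integral_add integrable_on_mult_right integral_mult_right)
    finally show ?thesis .
  qed
  then have "sphere_int (\<lambda>x. k * g x + h x) = integral {0..2*pi} (\<lambda>f. k * G f + H f)"
    by (simp add: sphere_int_def)
  also have "\<dots> = k * integral {0..2*pi} G + integral {0..2*pi} H"
    using sphere_integrand_integrable_continuous(2)[OF g] sphere_integrand_integrable_continuous(2)[OF h]
    unfolding G_def[abs_def] H_def[abs_def]
    by (simp add: integral_add integrable_on_mult_right integrable_continuous_interval integral_mult_right)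
  finally show ?thesis unfolding sphere_int_def G_def H_def .
qed

lemma sphere_int_bdry_Lt:
  assumes p: "p \<noteq> 1" and "Ck 3 u1" and "Ck 2 u2"
  shows "sphere_int (bdry (Lt p (u1, u2))) = - of_real (2 / (p - 1)) * sphere_int (bdry (u1, u2))"
proof -
  have "Ck (Suc (Suc (Suc 0))) u1" "Ck (Suc (Suc 0)) u2"
    using assms(2,3) by (simp_all add: numeral_3_eq_3 numeral_2_eq_2)
  then have u1: "continuous_on Bbar u1" "\<And>x. x \<in> Bbar \<Longrightarrow> u1 differentiable (at x within Bbar)"
      "\<And>j. continuous_on Bbar (pd j u1)"
      "\<And>j x. x \<in> Bbar \<Longrightarrow> pd j u1 differentiable (at x within Bbar)"
      "\<And>j k. continuous_on Bbar (pd k (pd j u1))"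
    and u2: "continuous_on Bbar u2" "\<And>x. x \<in> Bbar \<Longrightarrow> u2 differentiable (at x within Bbar)"
    by auto
  have "sphere_int (bdry (Lt p (u1, u2)))
      = sphere_int (\<lambda>x. - of_real (2 / (p - 1)) * bdry (u1, u2) x + sph_laplacian u1 x)"
    unfolding sphere_int_def
    by (simp add: bdry_Lt[OF sph_in_Bbar p u1(2)[OF sph_in_Bbar] u1(4)[OF sph_in_Bbar] u2(2)[OF sph_in_Bbar]])
  also have "\<dots> = - of_real (2 / (p - 1)) * sphere_int (bdry (u1, u2))"
  proof -
    have "continuous_on Bbar (bdry (u1, u2))"
      unfolding bdry_def fst_conv snd_conv by (intro continuous_intros u1 u2)
    moreover have "continuous_on Bbar (sph_laplacian u1)"
      unfolding sph_laplacian_def by (intro continuous_intros u1)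
    ultimately have "sphere_int (\<lambda>x. - of_real (2 / (p - 1)) * bdry (u1, u2) x + sph_laplacian u1 x)
        = - of_real (2 / (p - 1)) * sphere_int (bdry (u1, u2)) + sphere_int (sph_laplacian u1)"
      by (rule sphere_int_scaled_add)
    then show ?thesis using sphere_int_sph_laplacian_eq_0[OF u1(4) u1(3) u1(5)] by simp
  qed
  finally show ?thesis .
qed

theorem lemma3p2:
  fixes p :: real and u1 u2 :: "R3 \<Rightarrow> complex"
  assumes "p > 3" and "Ck 3 u1" and "Ck 2 u2"
  shows "Re (ip3 (Lt p (u1, u2)) (u1, u2)) \<le> - (2 / (p - 1)) * Re (ip3 (u1, u2) (u1, u2))"
proof -
  have "sphere_int (bdry (Lt p (u1, u2))) = - of_real (2 / (p - 1)) * sphere_int (bdry (u1, u2))"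
    using assms by (intro sphere_int_bdry_Lt) auto
  then have "ip3 (Lt p (u1, u2)) (u1, u2) = - of_real (2 / (p - 1)) * ip3 (u1, u2) (u1, u2)"
    by (simp add: ip3_def)
  then show ?thesis by simp
qed

end
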